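(* Let $a \in \mathbb{C}$ and $w \in \mathbb{C}\setminus\{0\}$. For $\tau > 0$ small enough that $0 < \tau |w| e^{\tau|a|} < 1/e$, define $$\Sigma_0^+(\tau) := \tfrac{1}{\tau}W_0\big(\tau|w|e^{-\tau|a|}\big) + |a|,\quad \Sigma_0^-(\tau) := \tfrac{1}{\tau}W_0\big(-\tau|w|e^{\tau|a|}\big) - |a|,\quad \Sigma_{-1}(\tau) := \tfrac{1}{\tau}W_{-1}\big(-\tau|w|e^{\tau|a|}\big) - |a|.$$ Then for every sufficiently small $\tau > 0$, every root $z$ of $z + a - we^{-\tau z} = 0$ satisfies $$\operatorname{Re}(z) \le \Sigma_{-1}(\tau) \quad\text{or}\quad \Sigma_0^-(\tau) \le \operatorname{Re}(z) \le \Sigma_0^+(\tau),$$ and moreover $\lim_{\tau\downarrow 0}\Sigma_0^\pm(\tau) = \pm(|a|+|w|)$ and $\lim_{\tau\downarrow 0}\Sigma_{-1}(\tau) = -\infty$.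
   Context: $W_0 : [-1/e,\infty) \to [-1,\infty)$ is the inverse of the increasing function $x \mapsto xe^x$ on $[-1,\infty)$, and $W_{-1} : [-1/e, 0) \to (-\infty,-1]$ is the inverse of the decreasing function $x\mapsto xe^x$ on $(-\infty,-1]$ (the two real branches of the Lambert $W$ function). *)

theory Defs
  imports "HOL-Analysis.Analysis"
begin

text \<open>Principal real branch of Lambert W: inverse of x * exp x on [-1, inf).
  Only meaningful for y \<ge> -1/e.\<close>
definition LambertW0 :: "real \<Rightarrow> real" where
  "LambertW0 y = (THE x. x \<ge> -1 \<and> x * exp x = y)"

text \<open>Lower real branch of Lambert W: inverse of x * exp x on (-inf, -1].
  Only meaningful for -1/e \<le> y < 0.\<close>
definition LambertWm1 :: "real \<Rightarrow> real" where
  "LambertWm1 y = (THE x. x \<le> -1 \<and> x * exp x = y)"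

definition Sigma0_plus :: "complex \<Rightarrow> complex \<Rightarrow> real \<Rightarrow> real" where
  "Sigma0_plus a w \<tau> = LambertW0 (\<tau> * cmod w * exp (- \<tau> * cmod a)) / \<tau> + cmod a"

definition Sigma0_minus :: "complex \<Rightarrow> complex \<Rightarrow> real \<Rightarrow> real" where
  "Sigma0_minus a w \<tau> = LambertW0 (- \<tau> * cmod w * exp (\<tau> * cmod a)) / \<tau> - cmod a"

definition Sigma_m1 :: "complex \<Rightarrow> complex \<Rightarrow> real \<Rightarrow> real" where
  "Sigma_m1 a w \<tau> = LambertWm1 (- \<tau> * cmod w * exp (\<tau> * cmod a)) / \<tau> - cmod a"

end

theory Submission
  imports Defs "HOL-Real_Asymp.Real_Asymp"
begin

text \<open>Taking real parts and moduli in z + a = w exp(-\<tau> z) gives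
  \<bar>Re z\<bar> - |a| \<le> |w| exp(-\<tau> Re z). Multiplying by \<tau> exp(\<tau> Re z \<mp> \<tau> |a|) turns the two
  resulting bounds into  v exp v \<le> \<tau> |w| exp(-\<tau> |a|)  for v = \<tau> (Re z - |a|) and
  -\<tau> |w| exp(\<tau> |a|) \<le> v exp v  for v = \<tau> (Re z + |a|), and monotonicity of x exp x on
  each side of -1 converts these into the stated bounds on Re z. The limits follow from
  W0(y) = y exp(-W0(y)), W0(y) \<rightarrow> 0 as y \<rightarrow> 0, and W(-1)(y) \<le> -1.\<close>

lemma xexp_has_real_derivative:
  "((\<lambda>x::real. x * exp x) has_real_derivative (1 + r) * exp r) (at r)"
  by (auto intro!: derivative_eq_intros simp: algebra_simps)

lemma xexp_le_xexp_iff_ge_minus_one: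
  fixes x y :: real
  assumes "-1 \<le> x" "-1 \<le> y"
  shows "x * exp x \<le> y * exp y \<longleftrightarrow> x \<le> y"
proof -
  have "strict_mono_on {-1..} (\<lambda>x::real. x * exp x)"
  proof (rule strict_mono_onI)
    fix s t :: real assume "s \<in> {-1..}" "s < t"
    show "s * exp s < t * exp t"
    proof (rule DERIV_pos_imp_increasing_open[OF \<open>s < t\<close>])
      fix r assume "s < r"
      with \<open>s \<in> {-1..}\<close> have "0 < (1 + r) * exp r" by simp
      with xexp_has_real_derivative
      show "\<exists>d. ((\<lambda>x. x * exp x) has_real_derivative d) (at r) \<and> 0 < d" by blast
    qed (intro continuous_intros)
  qed
  from strict_mono_on_less_eq[OF this] assms show ?thesis by simp
qed

lemma xexp_le_xexp_iff_le_minus_one: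
  fixes x y :: real
  assumes "x \<le> -1" "y \<le> -1"
  shows "x * exp x \<le> y * exp y \<longleftrightarrow> y \<le> x"
proof -
  have dec: "t * exp t < s * exp s" if "s < t" "t \<le> -1" for s t :: real
  proof (rule DERIV_neg_imp_decreasing_open[OF \<open>s < t\<close>])
    fix r assume "r < t"
    with \<open>t \<le> -1\<close> have "(1 + r) * exp r < 0" by (simp add: mult_neg_pos)
    with xexp_has_real_derivative
    show "\<exists>d. ((\<lambda>x. x * exp x) has_real_derivative d) (at r) \<and> d < 0" by blast
  qed (intro continuous_intros)
  show ?thesis using dec[of x y] dec[of y x] assms by (cases x y rule: linorder_cases) auto
qed

lemma LambertW0_ex1:
  fixes y :: real
  assumes "- exp (-1) \<le> y"
  shows "\<exists>!x. -1 \<le> x \<and> x * exp x = y"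
proof -
  have "0 < y + 1" using assms exp_less_one_iff[of "-1::real"] by linarith
  then have "y + 1 \<le> (y + 1) * exp (y + 1)" by simp
  then have "y \<le> (y + 1) * exp (y + 1)" by linarith
  then have "\<exists>x. -1 \<le> x \<and> x \<le> y + 1 \<and> x * exp x = y"
    using assms \<open>0 < y + 1\<close> by (intro IVT') (auto intro!: continuous_intros)
  then obtain x where "-1 \<le> x" "x * exp x = y" by blast
  then show ?thesis
    using xexp_le_xexp_iff_ge_minus_one by (metis order_antisym order_refl)
qed

lemma LambertWm1_ex1:
  fixes y :: real
  assumes "- exp (-1) \<le> y" "y < 0"
  shows "\<exists>!x. x \<le> -1 \<and> x * exp x = y"
proof -
  have "((\<lambda>x::real. x * exp x) \<longlongrightarrow> 0) at_bot" by real_asymp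
  then have "\<forall>\<^sub>F x in at_bot. y < x * exp x \<and> x \<le> -1"
    by (rule eventually_conj[OF order_tendstoD(1)[OF _ \<open>y < 0\<close>] eventually_le_at_bot])
  then obtain b where "\<forall>x\<le>b. y < x * exp x \<and> x \<le> -1"
    by (auto simp: eventually_at_bot_linorder)
  then have "y < b * exp b" "b \<le> -1" by auto
  then have "\<exists>x. b \<le> x \<and> x \<le> -1 \<and> x * exp x = y"
    using assms by (intro IVT2') (auto intro!: continuous_intros)
  then obtain x where "x \<le> -1" "x * exp x = y" by blast
  then show ?thesis
    using xexp_le_xexp_iff_le_minus_one by (metis order_antisym order_refl)
qed

lemma LambertW0_inverse:
  assumes "- exp (-1) \<le> y"
  shows "-1 \<le> LambertW0 y" "LambertW0 y * exp (LambertW0 y) = y"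
  using theI'[OF LambertW0_ex1[OF assms]] unfolding LambertW0_def by auto

lemma LambertWm1_inverse:
  assumes "- exp (-1) \<le> y" "y < 0"
  shows "LambertWm1 y \<le> -1" "LambertWm1 y * exp (LambertWm1 y) = y"
  using theI'[OF LambertWm1_ex1[OF assms]] unfolding LambertWm1_def by auto

lemma le_LambertW0:
  assumes "- exp (-1) \<le> y" "u * exp u \<le> y"
  shows "u \<le> LambertW0 y"
proof (cases "-1 \<le> u")
  case True
  with assms xexp_le_xexp_iff_ge_minus_one[OF True LambertW0_inverse(1)] show ?thesis
    by (simp add: LambertW0_inverse(2))
next
  case False
  with LambertW0_inverse(1)[OF assms(1)] show ?thesis by linarith
qed

lemma le_LambertWm1_or_LambertW0_le:
  assumes "- exp (-1) \<le> y" "y \<le> v * exp v"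
  shows "v \<le> LambertWm1 y \<or> LambertW0 y \<le> v"
proof (cases "-1 \<le> v")
  case True
  with assms xexp_le_xexp_iff_ge_minus_one[OF LambertW0_inverse(1) True] show ?thesis
    by (simp add: LambertW0_inverse(2))
next
  case False
  then have "y < 0" using assms(2) mult_neg_pos[of v "exp v"] by simp
  with assms False xexp_le_xexp_iff_le_minus_one[OF LambertWm1_inverse(1) _, of y v] show ?thesis
    by (simp add: LambertWm1_inverse(2))
qed

lemma abs_LambertW0_le:
  assumes "- exp (-1) \<le> y"
  shows "\<bar>LambertW0 y\<bar> \<le> exp 1 * \<bar>y\<bar>"
proof -
  define u where "u = LambertW0 y"
  have u: "-1 \<le> u" "u * exp u = y" using LambertW0_inverse[OF assms] by (simp_all add: u_def)
  have "exp (-1) \<le> exp u" using u by simp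
  then have "\<bar>u\<bar> * exp (-1) \<le> \<bar>u\<bar> * exp u" by (intro mult_left_mono) simp_all
  also have "\<dots> = \<bar>y\<bar>" using u(2) by (auto simp: abs_mult)
  finally show ?thesis by (simp add: u_def exp_minus field_simps)
qed

lemma LambertW0_eq_mult_exp:
  assumes "- exp (-1) \<le> y"
  shows "LambertW0 y = y * exp (- LambertW0 y)"
  using LambertW0_inverse(2)[OF assms] by (simp add: exp_minus field_simps)

lemma tendsto_LambertW0_div:
  fixes g :: "real \<Rightarrow> real"
  assumes "(g \<longlongrightarrow> L) (at_right 0)"
  shows "((\<lambda>\<tau>. LambertW0 (\<tau> * g \<tau>) / \<tau>) \<longlongrightarrow> L) (at_right 0)"
proof -
  have "((\<lambda>\<tau>. \<tau> * g \<tau>) \<longlongrightarrow> 0 * L) (at_right 0)"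
    by (intro tendsto_intros assms)
  then have h: "((\<lambda>\<tau>. \<tau> * g \<tau>) \<longlongrightarrow> 0) (at_right 0)" by simp
  have dom: "\<forall>\<^sub>F \<tau> in at_right 0. - exp (-1) \<le> \<tau> * g \<tau>"
    using order_tendstoD(1)[OF h, of "- exp (-1)"] by (auto elim: eventually_mono)
  have "((\<lambda>\<tau>. LambertW0 (\<tau> * g \<tau>)) \<longlongrightarrow> 0) (at_right 0)"
  proof (rule tendsto_0_le[OF h, of _ "exp 1"])
    show "\<forall>\<^sub>F \<tau> in at_right 0. norm (LambertW0 (\<tau> * g \<tau>)) \<le> norm (\<tau> * g \<tau>) * exp 1"
      using dom by eventually_elim (simp add: abs_LambertW0_le mult.commute)
  qed
  then have "((\<lambda>\<tau>. g \<tau> * exp (- LambertW0 (\<tau> * g \<tau>))) \<longlongrightarrow> L * exp (- 0)) (at_right 0)"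
    by (intro tendsto_intros assms)
  moreover have "\<forall>\<^sub>F \<tau> in at_right 0. g \<tau> * exp (- LambertW0 (\<tau> * g \<tau>)) = LambertW0 (\<tau> * g \<tau>) / \<tau>"
    using dom eventually_at_right_less[of 0] by eventually_elim (subst (2) LambertW0_eq_mult_exp, auto)
  ultimately show ?thesis by (simp add: tendsto_cong)
qed

lemma root_Re_location:
  fixes a w z :: complex and \<tau> :: real
  assumes "0 < \<tau>" "\<tau> * cmod w * exp (\<tau> * cmod a) \<le> exp (-1)"
    and "z + a - w * exp (- complex_of_real \<tau> * z) = 0"
  shows "Re z \<le> Sigma_m1 a w \<tau> \<or> (Sigma0_minus a w \<tau> \<le> Re z \<and> Re z \<le> Sigma0_plus a w \<tau>)"
proof -
  define x A B where "x = Re z" and "A = cmod a" and "B = cmod w"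
  have "z + a = w * exp (- complex_of_real \<tau> * z)" using assms(3) by simp
  then have "cmod (z + a) = B * exp (- \<tau> * x)" by (simp add: norm_mult x_def B_def)
  moreover have "\<bar>x\<bar> - A \<le> cmod (z + a)"
    using abs_Re_le_cmod[of "z + a"] abs_Re_le_cmod[of a] by (simp add: x_def A_def)
  ultimately have bound: "\<bar>x\<bar> - A \<le> B * exp (- \<tau> * x)" by simp
  have rescale: "\<tau> * s * exp (\<tau> * (x + d)) \<le> \<tau> * B * exp (\<tau> * d)"
    if "s \<le> B * exp (- \<tau> * x)" for s d
  proof -
    have "\<tau> * s * exp (\<tau> * (x + d)) \<le> \<tau> * (B * exp (- \<tau> * x)) * exp (\<tau> * (x + d))"
      using that assms(1) by (intro mult_right_mono mult_left_mono) auto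
    also have "\<dots> = \<tau> * B * exp (\<tau> * d)" by (simp add: algebra_simps flip: exp_add)
    finally show ?thesis .
  qed
  from bound have "x - A \<le> B * exp (- \<tau> * x)" by linarith
  from rescale[OF this, of "- A"]
  have "\<tau> * (x - A) * exp (\<tau> * (x - A)) \<le> \<tau> * B * exp (- \<tau> * A)" by simp
  then have "\<tau> * (x - A) \<le> LambertW0 (\<tau> * B * exp (- \<tau> * A))"
    using assms(1) by (intro le_LambertW0) (auto simp: B_def intro: order_trans[of _ 0])
  then have "x - A \<le> LambertW0 (\<tau> * B * exp (- \<tau> * A)) / \<tau>"
    using assms(1) by (simp add: pos_le_divide_eq mult.commute)
  then have upper: "x \<le> Sigma0_plus a w \<tau>" by (simp add: Sigma0_plus_def A_def B_def)
  from bound have "- x - A \<le> B * exp (- \<tau> * x)" by linarith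
  from rescale[OF this, of A]
  have "- \<tau> * B * exp (\<tau> * A) \<le> \<tau> * (x + A) * exp (\<tau> * (x + A))"
    by (simp add: algebra_simps)
  then have "\<tau> * (x + A) \<le> LambertWm1 (- \<tau> * B * exp (\<tau> * A))
      \<or> LambertW0 (- \<tau> * B * exp (\<tau> * A)) \<le> \<tau> * (x + A)"
    using assms(2) by (intro le_LambertWm1_or_LambertW0_le) (simp_all add: A_def B_def)
  then have "x + A \<le> LambertWm1 (- \<tau> * B * exp (\<tau> * A)) / \<tau>
      \<or> LambertW0 (- \<tau> * B * exp (\<tau> * A)) / \<tau> \<le> x + A"
    using assms(1) by (simp add: pos_le_divide_eq pos_divide_le_eq mult.commute)
  with upper show ?thesis by (auto simp: Sigma_m1_def Sigma0_minus_def A_def B_def x_def)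
qed

lemma eventually_delay_small:
  fixes B A :: real
  shows "\<forall>\<^sub>F \<tau> in at_right 0. 0 < \<tau> \<and> \<tau> * B * exp (\<tau> * A) < exp (-1)"
proof -
  have "((\<lambda>\<tau>. \<tau> * B * exp (\<tau> * A)) \<longlongrightarrow> 0) (at_right 0)" by real_asymp
  then show ?thesis by (intro eventually_conj eventually_at_right_less order_tendstoD(2)) auto
qed

lemma tendsto_Sigma0_plus: "(Sigma0_plus a w \<longlongrightarrow> cmod a + cmod w) (at_right 0)"
proof -
  have "((\<lambda>\<tau>. cmod w * exp (- \<tau> * cmod a)) \<longlongrightarrow> cmod w) (at_right 0)" by real_asymp
  from tendsto_add[OF tendsto_LambertW0_div[OF this] tendsto_const[of "cmod a"]] show ?thesis
    by (simp add: Sigma0_plus_def[abs_def] mult.assoc add.commute)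
qed

lemma tendsto_Sigma0_minus: "(Sigma0_minus a w \<longlongrightarrow> - (cmod a + cmod w)) (at_right 0)"
proof -
  have "((\<lambda>\<tau>. - cmod w * exp (\<tau> * cmod a)) \<longlongrightarrow> - cmod w) (at_right 0)" by real_asymp
  from tendsto_diff[OF tendsto_LambertW0_div[OF this] tendsto_const[of "cmod a"]]
  have "(Sigma0_minus a w \<longlongrightarrow> - cmod w - cmod a) (at_right 0)"
    by (simp add: Sigma0_minus_def[abs_def] mult.assoc)
  then show ?thesis by (rule tendsto_eq_rhs) simp
qed

lemma filterlim_Sigma_m1_at_bot:
  assumes "w \<noteq> 0"
  shows "filterlim (Sigma_m1 a w) at_bot (at_right 0)"
proof (rule filterlim_at_bot_mono)
  show "filterlim (\<lambda>\<tau>::real. - 1 / \<tau> - cmod a) at_bot (at_right 0)" by real_asymp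
  show "\<forall>\<^sub>F \<tau> in at_right 0. Sigma_m1 a w \<tau> \<le> - 1 / \<tau> - cmod a"
    using eventually_delay_small[of "cmod w" "cmod a"]
  proof eventually_elim
    case (elim \<tau>)
    define c where "c = \<tau> * cmod w * exp (\<tau> * cmod a)"
    have "- exp (-1) \<le> - c" "- c < 0" using elim assms by (auto simp: c_def)
    from LambertWm1_inverse(1)[OF this] elim have "LambertWm1 (- c) / \<tau> \<le> - 1 / \<tau>"
      by (intro divide_right_mono) auto
    then show ?case by (simp add: Sigma_m1_def c_def)
  qed
qed

theorem mainTheorem3:
  fixes a w :: complex
  assumes "w \<noteq> 0"
  shows "(\<forall>\<^sub>F \<tau> in at_right 0.
            \<forall>z::complex. z + a - w * exp (- complex_of_real \<tau> * z) = 0 \<longrightarrow>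
              (Re z \<le> Sigma_m1 a w \<tau> \<or>
               (Sigma0_minus a w \<tau> \<le> Re z \<and> Re z \<le> Sigma0_plus a w \<tau>)))
       \<and> (Sigma0_plus a w \<longlongrightarrow> cmod a + cmod w) (at_right 0)
       \<and> (Sigma0_minus a w \<longlongrightarrow> - (cmod a + cmod w)) (at_right 0)
       \<and> filterlim (Sigma_m1 a w) at_bot (at_right 0)"
proof -
  from eventually_delay_small[of "cmod w" "cmod a"] have "\<forall>\<^sub>F \<tau> in at_right 0.
            \<forall>z::complex. z + a - w * exp (- complex_of_real \<tau> * z) = 0 \<longrightarrow>
              (Re z \<le> Sigma_m1 a w \<tau> \<or>
               (Sigma0_minus a w \<tau> \<le> Re z \<and> Re z \<le> Sigma0_plus a w \<tau>))"
    by eventually_elim (intro allI impI root_Re_location, auto)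
  with tendsto_Sigma0_plus tendsto_Sigma0_minus filterlim_Sigma_m1_at_bot[OF assms]
  show ?thesis by blast
qed

end
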